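(* Let $V$ be a set of (three-valued) interpretations over $A$. (1) For each ADF $D$ such that $\mathrm{adm}(D)=V$, there is an adm-characterization $f_D$ for $V$; (2) for each adm-characterization $f:\mathcal{V}_2\to\mathcal{V}_2$ for $V$ we have $\mathrm{adm}(D_f)=V$.
   Context: Let $A$ be a fixed finite set of statements. An interpretation is a mapping $v:A\to\{\mathbf{t},\mathbf{f},\mathbf{u}\}$; $\mathcal{V}$ is the set of all interpretations and $\mathcal{V}_2$ the set of two-valued ones (never assigning $\mathbf{u}$). The information ordering is $\mathbf{u}<_i\mathbf{t}$, $\mathbf{u}<_i\mathbf{f}$, extended pointwise. For $v\in\mathcal{V}$, $[v]_2$ is the set of two-valued interpretations $w$ with $v\leq_i w$. An ADF is $D=(A,L,C)$ where each statement $a$ has an acceptance formula $\varphi_a$ over its parents. The operator $\Gamma_D$ maps $v$ to the interpretation assigning to each $a$ the greatest lower bound w.r.t. $\leq_i$ (consensus: $\mathbf{t}$ if all are $\mathbf{t}$, $\mathbf{f}$ if all are $\mathbf{f}$, otherwise $\mathbf{u}$) of $\{w(\varphi_a)\mid w\in[v]_2\}$. $v$ is admissible for $D$ iff $v\leq_i\Gamma_D(v)$; $\mathrm{adm}(D)$ is the set of admissible interpretations. A function $f:\mathcal{V}_2\to\mathcal{V}_2$ is an adm-characterization of $V$ iff for each $v\in\mathcal{V}$: $v\in V$ iff for every $a\in A$, $v(a)\neq\mathbf{u}$ implies $f(v_2)(a)=v(a)$ for all $v_2\in[v]_2$. For $f:\mathcal{V}_2\to\mathcal{V}_2$, $D_f$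 is the ADF whose acceptance formula for each $a$ is $\varphi^f_a=\bigvee_{w\in\mathcal{V}_2,\,f(w)(a)=\mathbf{t}}\phi_w$ with $\phi_w=\bigwedge_{w(a')=\mathbf{t}}a'\wedge\bigwedge_{w(a')=\mathbf{f}}\neg a'$. *)

theory Defs
  imports Main
begin

text \<open>Statements are the elements of a finite type 'a (the fixed finite set A is UNIV).\<close>

datatype tv = T | F | U

type_synonym 'a interp = "'a \<Rightarrow> tv"
type_synonym 'a interp2 = "'a \<Rightarrow> bool"

definition tv_of_bool :: "bool \<Rightarrow> tv" where
  "tv_of_bool b = (if b then T else F)"

definition emb :: "'a interp2 \<Rightarrow> 'a interp" where
  "emb w = (\<lambda>a. tv_of_bool (w a))"

definition leq_i :: "'a interp \<Rightarrow> 'a interp \<Rightarrow> bool" where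
  "leq_i v w \<longleftrightarrow> (\<forall>a. v a = U \<or> v a = w a)"

definition completions :: "'a interp \<Rightarrow> 'a interp2 set" where
  "completions v = {w. leq_i v (emb w)}"

datatype 'a form = Atom 'a | Top | Bot | Neg "'a form" | Conj "'a form" "'a form" | Disj "'a form" "'a form"

primrec eval :: "'a interp2 \<Rightarrow> 'a form \<Rightarrow> bool" where
  "eval w (Atom a) = w a"
| "eval w Top = True"
| "eval w Bot = False"
| "eval w (Neg p) = (\<not> eval w p)"
| "eval w (Conj p q) = (eval w p \<and> eval w q)"
| "eval w (Disj p q) = (eval w p \<or> eval w q)"

primrec atoms :: "'a form \<Rightarrow> 'a set" where
  "atoms (Atom a) = {a}"
| "atoms Top = {}"
| "atoms Bot = {}"
| "atoms (Neg p) = atoms p"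
| "atoms (Conj p q) = atoms p \<union> atoms q"
| "atoms (Disj p q) = atoms p \<union> atoms q"

text \<open>An ADF D = (L, C): links L and an acceptance formula for each statement,
  whose atoms are parents of the statement.\<close>
type_synonym 'a adf = "('a \<times> 'a) set \<times> ('a \<Rightarrow> 'a form)"

definition is_adf :: "'a adf \<Rightarrow> bool" where
  "is_adf D \<longleftrightarrow> (\<forall>a. atoms (snd D a) \<subseteq> {b. (b, a) \<in> fst D})"

text \<open>Greatest lower bound w.r.t. the information ordering (consensus).\<close>
definition consensus :: "bool set \<Rightarrow> tv" where
  "consensus S = (if (\<forall>x\<in>S. x) then T else if (\<forall>x\<in>S. \<not> x) then F else U)"

definition Gamma :: "'a adf \<Rightarrow> 'a interp \<Rightarrow> 'a interp" where
  "Gamma D v = (\<lambda>a. consensus {eval w (snd D a) | w. w \<in> completions v})"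

definition adm :: "'a adf \<Rightarrow> 'a interp set" where
  "adm D = {v. leq_i v (Gamma D v)}"

definition adm_char :: "('a interp2 \<Rightarrow> 'a interp2) \<Rightarrow> 'a interp set \<Rightarrow> bool" where
  "adm_char f V \<longleftrightarrow> (\<forall>v. v \<in> V \<longleftrightarrow>
      (\<forall>a. v a \<noteq> U \<longrightarrow> (\<forall>w \<in> completions v. emb (f w) a = v a)))"

definition BigConj :: "'a form set \<Rightarrow> 'a form" where
  "BigConj S = foldr Conj (SOME xs. set xs = S) Top"

definition BigDisj :: "'a form set \<Rightarrow> 'a form" where
  "BigDisj S = foldr Disj (SOME xs. set xs = S) Bot"

definition phi_w :: "('a::finite) interp2 \<Rightarrow> 'a form" where
  "phi_w w = BigConj ({Atom a' | a'. w a'} \<union> {Neg (Atom a') | a'. \<not> w a'})"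

definition phi_f :: "(('a::finite) interp2 \<Rightarrow> 'a interp2) \<Rightarrow> 'a \<Rightarrow> 'a form" where
  "phi_f f a = BigDisj {phi_w w | w. f w a}"

definition D_f :: "(('a::finite) interp2 \<Rightarrow> 'a interp2) \<Rightarrow> 'a adf" where
  "D_f f = ({(b, a). b \<in> atoms (phi_f f a)}, phi_f f)"

end

theory Submission
  imports Defs
begin

text \<open>Both parts rest on one observation: for every ADF D, admissibility of D is characterised
  by the two-valued map sending w to the interpretation a \<mapsto> w(phi_a), because the consensus of
  the nonempty set of values of phi_a over the completions of v equals a defined truth value
  exactly when all these values agree with it. As an adm-characterisation determines the set it
  characterises, (1) follows at once, and (2) follows because the acceptance formulas of D_f are
  canonical disjunctive normal forms, so that the map induced by D_f is f itself.\<close>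

definition acceptance_map :: "'a adf \<Rightarrow> 'a interp2 \<Rightarrow> 'a interp2" where
  "acceptance_map D = (\<lambda>w a. eval w (snd D a))"

lemma completions_nonempty: "completions v \<noteq> {}"
proof -
  have "(\<lambda>a. v a = T) \<in> completions v"
    unfolding completions_def leq_i_def emb_def tv_of_bool_def by (auto intro: tv.exhaust)
  then show ?thesis by blast
qed

lemma consensus_eq_defined_iff:
  assumes "S \<noteq> {}" and "t \<noteq> U"
  shows "t = consensus S \<longleftrightarrow> (\<forall>x\<in>S. tv_of_bool x = t)"
  using assms by (cases t) (auto simp: consensus_def tv_of_bool_def)

lemma adm_char_acceptance_map: "adm_char (acceptance_map D) (adm D)"
  unfolding adm_char_def
proof
  fix v :: "'a interp"
  have "(v a = U \<or> v a = consensus {eval w (snd D a) | w. w \<in> completions v}) \<longleftrightarrow>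
      (v a \<noteq> U \<longrightarrow> (\<forall>w \<in> completions v. tv_of_bool (eval w (snd D a)) = v a))" for a
  proof -
    have "{eval w (snd D a) | w. w \<in> completions v} \<noteq> {}"
      using completions_nonempty by blast
    then show ?thesis
      by (cases "v a = U") (auto simp: consensus_eq_defined_iff)
  qed
  then show "v \<in> adm D \<longleftrightarrow>
      (\<forall>a. v a \<noteq> U \<longrightarrow> (\<forall>w \<in> completions v. emb (acceptance_map D w) a = v a))"
    unfolding adm_def leq_i_def Gamma_def acceptance_map_def emb_def by simp
qed

lemma adm_char_unique: "adm_char f V \<Longrightarrow> adm_char f W \<Longrightarrow> V = W"
  unfolding adm_char_def by blast

lemma eval_BigConj: "finite S \<Longrightarrow> eval w (BigConj S) = (\<forall>x\<in>S. eval w x)"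
proof -
  have "eval w (foldr Conj xs Top) = (\<forall>x\<in>set xs. eval w x)" for xs
    by (induction xs) auto
  then show "finite S \<Longrightarrow> ?thesis"
    unfolding BigConj_def by (metis (mono_tags, lifting) finite_list someI_ex)
qed

lemma eval_BigDisj: "finite S \<Longrightarrow> eval w (BigDisj S) = (\<exists>x\<in>S. eval w x)"
proof -
  have "eval w (foldr Disj xs Bot) = (\<exists>x\<in>set xs. eval w x)" for xs
    by (induction xs) auto
  then show "finite S \<Longrightarrow> ?thesis"
    unfolding BigDisj_def by (metis (mono_tags, lifting) finite_list someI_ex)
qed

lemma eval_phi_w: "eval w' (phi_w (w :: ('a::finite) interp2)) \<longleftrightarrow> w' = w"
proof -
  let ?literals = "{Atom b | b. w b} \<union> {Neg (Atom b) | b. \<not> w b}"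
  have "(\<forall>x \<in> ?literals. eval w' x) \<longleftrightarrow> (\<forall>a. w' a = w a)"
  proof
    assume literals_hold: "\<forall>x \<in> ?literals. eval w' x"
    show "\<forall>a. w' a = w a"
    proof
      fix a
      have "w a \<Longrightarrow> eval w' (Atom a)" and "\<not> w a \<Longrightarrow> eval w' (Neg (Atom a))"
        using literals_hold by blast+
      then show "w' a = w a" by auto
    qed
  qed auto
  then show ?thesis
    unfolding phi_w_def by (simp add: eval_BigConj fun_eq_iff)
qed

lemma eval_phi_f: "eval w (phi_f (f :: ('a::finite) interp2 \<Rightarrow> 'a interp2) a) = f w a"
proof -
  have "{phi_w w | w. f w a} = phi_w ` {w. f w a}" by auto
  then have "finite {phi_w w | w. f w a}" by simp
  then show ?thesis
    unfolding phi_f_def by (auto simp: eval_BigDisj eval_phi_w)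
qed

lemma acceptance_map_D_f: "acceptance_map (D_f f) = f"
  by (simp add: acceptance_map_def D_f_def eval_phi_f fun_eq_iff)

lemma is_adf_D_f: "is_adf (D_f f)"
  by (auto simp: is_adf_def D_f_def)

theorem proposition3:
  fixes V :: "('a::finite) interp set"
  shows "(\<forall>D :: 'a adf. is_adf D \<and> adm D = V \<longrightarrow> (\<exists>fD. adm_char fD V))
       \<and> (\<forall>f. adm_char f V \<longrightarrow> is_adf (D_f f) \<and> adm (D_f f) = V)"
proof (rule conjI; intro allI impI)
  fix D :: "'a adf"
  assume "is_adf D \<and> adm D = V"
  then show "\<exists>fD. adm_char fD V"
    using adm_char_acceptance_map by blast
next
  fix f
  assume "adm_char f V"
  moreover have "adm_char f (adm (D_f f))"
    using adm_char_acceptance_map[of "D_f f"] by (simp add: acceptance_map_D_f)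
  ultimately show "is_adf (D_f f) \<and> adm (D_f f) = V"
    using adm_char_unique is_adf_D_f by blast
qed

end
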